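(* Let $X,Y$ be topological spaces, $(Z,d)$ a metric space and $\mathcal F\subseteq Z^{X\times Y}$ a family of separately equicontinuous functions, i.e. $\{f(x,\cdot):f\in\mathcal F\}$ is equicontinuous on $Y$ for each $x\in X$ and $\{f(\cdot,y):f\in\mathcal F\}$ is equicontinuous on $X$ for each $y\in Y$. Then $\mathcal F$ is equi-weakly separated (as a family of functions on $X\times Y$ with the product topology).
   Context: A neighborhood assignment on a space $W$ is a family $\{V_w\}_{w\in W}$ of open subsets of $W$ with $w\in V_w$. $\mathcal F\subseteq Z^W$ is equi-weakly separated if for every $\varepsilon>0$ there is a neighborhood assignment $\{V_w\}_{w\in W}$ such that for all $p,q\in W$ and all $f\in\mathcal F$, $(p,q)\in V_q\times V_p$ implies $d(f(p),f(q))<\varepsilon$. A family of functions is equicontinuous on a space if at every point $x$, for each $\varepsilon>0$ there is a neighborhood $U$ of $x$ with $d(f(x'),f(x))<\varepsilon$ for all $x'\in U$ and all members $f$. *)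

theory Defs
  imports "HOL-Analysis.Analysis"
begin

definition equicontinuous :: "('a::topological_space \<Rightarrow> 'z::metric_space) set \<Rightarrow> bool" where
  "equicontinuous F \<longleftrightarrow>
     (\<forall>x. \<forall>e>0. \<exists>U. open U \<and> x \<in> U \<and> (\<forall>x'\<in>U. \<forall>f\<in>F. dist (f x') (f x) < e))"

definition equi_weakly_separated :: "('w::topological_space \<Rightarrow> 'z::metric_space) set \<Rightarrow> bool" where
  "equi_weakly_separated F \<longleftrightarrow>
     (\<forall>e>0. \<exists>V. (\<forall>w. open (V w) \<and> w \<in> V w) \<and>
        (\<forall>p q. \<forall>f\<in>F. (p, q) \<in> V q \<times> V p \<longrightarrow> dist (f p) (f q) < e))"

end

theory Submission
  imports Defs
begin

text \<open>Let \<open>W y x\<close> and \<open>U x y\<close> be neighbourhoods of \<open>x\<close> and \<open>y\<close> witnessing \<open>e/2\<close>-equicontinuity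
  of the sections \<open>f (\<cdot>, y)\<close> and \<open>f (x, \<cdot>)\<close>, and put \<open>V (x, y) = W y x \<times> U x y\<close>.
  If \<open>(x\<^sub>1, y\<^sub>1) \<in> V (x\<^sub>2, y\<^sub>2)\<close> and \<open>(x\<^sub>2, y\<^sub>2) \<in> V (x\<^sub>1, y\<^sub>1)\<close>, then \<open>x\<^sub>1 \<in> W y\<^sub>2 x\<^sub>2\<close> and
  \<open>y\<^sub>2 \<in> U x\<^sub>1 y\<^sub>1\<close>, so the corner \<open>(x\<^sub>1, y\<^sub>2)\<close> is \<open>e/2\<close>-close to both points under every \<open>f\<close>.\<close>

lemma equicontinuous_neighbourhoods:
  fixes G :: "'i \<Rightarrow> ('a::topological_space \<Rightarrow> 'z::metric_space) set"
  assumes "\<forall>i. equicontinuous (G i)" and "e > 0"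
  obtains U where "\<And>i x. open (U i x)" and "\<And>i x. x \<in> U i x"
    and "\<And>i x x' g. x' \<in> U i x \<Longrightarrow> g \<in> G i \<Longrightarrow> dist (g x') (g x) < e"
proof -
  have "\<forall>i x. \<exists>U. open U \<and> x \<in> U \<and> (\<forall>x'\<in>U. \<forall>g\<in>G i. dist (g x') (g x) < e)"
    using assms unfolding equicontinuous_def by blast
  then obtain U where "\<forall>i x. open (U i x) \<and> x \<in> U i x \<and> (\<forall>x'\<in>U i x. \<forall>g\<in>G i. dist (g x') (g x) < e)"
    by metis
  then show ?thesis
    using that by blast
qed

lemma dist_lt_via_corner:
  fixes f :: "'a \<times> 'b \<Rightarrow> 'z::metric_space"
  assumes "dist (f (x\<^sub>1, y\<^sub>2)) (f (x\<^sub>1, y\<^sub>1)) < e/2" and "dist (f (x\<^sub>1, y\<^sub>2)) (f (x\<^sub>2, y\<^sub>2)) < e/2"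
  shows "dist (f (x\<^sub>1, y\<^sub>1)) (f (x\<^sub>2, y\<^sub>2)) < e"
  using dist_triangle3[of "f (x\<^sub>1, y\<^sub>1)" "f (x\<^sub>2, y\<^sub>2)" "f (x\<^sub>1, y\<^sub>2)"] assms by linarith

theorem corollary3p14:
  fixes F :: "('a::topological_space \<times> 'b::topological_space \<Rightarrow> 'z::metric_space) set"
  assumes "\<forall>x. equicontinuous ((\<lambda>f. \<lambda>y. f (x, y)) ` F)"
    and "\<forall>y. equicontinuous ((\<lambda>f. \<lambda>x. f (x, y)) ` F)"
  shows "equi_weakly_separated F"
  unfolding equi_weakly_separated_def
proof (intro allI impI)
  fix e :: real
  assume "e > 0"
  then have "e/2 > 0"
    by simp
  obtain U where U: "\<And>x y. open (U x y)" "\<And>x y. y \<in> U x y"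
    and U_sections: "\<And>x y y' g. y' \<in> U x y \<Longrightarrow> g \<in> (\<lambda>f. \<lambda>y. f (x, y)) ` F \<Longrightarrow> dist (g y') (g y) < e/2"
    using equicontinuous_neighbourhoods[OF assms(1) \<open>e/2 > 0\<close>] by blast
  obtain W where W: "\<And>y x. open (W y x)" "\<And>y x. x \<in> W y x"
    and W_sections: "\<And>y x x' g. x' \<in> W y x \<Longrightarrow> g \<in> (\<lambda>f. \<lambda>x. f (x, y)) ` F \<Longrightarrow> dist (g x') (g x) < e/2"
    using equicontinuous_neighbourhoods[OF assms(2) \<open>e/2 > 0\<close>] by blast
  have U_close: "dist (f (x, y')) (f (x, y)) < e/2" if "y' \<in> U x y" "f \<in> F" for f x y y'
    using U_sections[OF that(1)] that(2) by blast
  have W_close: "dist (f (x', y)) (f (x, y)) < e/2" if "x' \<in> W y x" "f \<in> F" for f x y x'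
    using W_sections[OF that(1)] that(2) by blast
  define V where "V w = W (snd w) (fst w) \<times> U (fst w) (snd w)" for w :: "'a \<times> 'b"
  have "\<forall>w. open (V w) \<and> w \<in> V w"
    using U W by (auto simp: V_def open_Times)
  moreover have "dist (f p) (f q) < e" if "f \<in> F" and "(p, q) \<in> V q \<times> V p" for f p q
    using that U_close W_close dist_lt_via_corner[where f = f
        and x\<^sub>1 = "fst p" and y\<^sub>1 = "snd p" and x\<^sub>2 = "fst q" and y\<^sub>2 = "snd q"]
    by (auto simp: V_def)
  ultimately show "\<exists>V. (\<forall>w. open (V w) \<and> w \<in> V w) \<and>
      (\<forall>p q. \<forall>f\<in>F. (p, q) \<in> V q \<times> V p \<longrightarrow> dist (f p) (f q) < e)"
    by blast
qed

end
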